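(* Let $F$ be a finite field with $q=|F|$. Let $k,n\in\mathbb{N}$ satisfy $k\le n$. Fix any $a=(a_0,\ldots,a_{k-1})\in F^k$. Then the number of $(2n+1)$-tuples $x=(x_0,\ldots,x_{2n})\in F^{2n+1}$ satisfying $(x_0,\ldots,x_{k-1})=a$ and $\det(H_{n,n}(x))=0$ is $q^{2n-k}$.
   Context: $\mathbb{N}=\{0,1,2,\ldots\}$. For $x=(x_0,\ldots,x_{2n})$, $H_{n,n}(x)$ is the $(n+1)\times(n+1)$ matrix $(x_{i+j})_{0\le i,j\le n}$. *)

theory Defs
  imports "Jordan_Normal_Form.Determinant"
begin

definition hankel :: "nat \<Rightarrow> 'a list \<Rightarrow> 'a mat" where
  "hankel n xs = mat (n+1) (n+1) (\<lambda>(i,j). xs ! (i+j))"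

end

theory Submission
  imports Defs "HOL-Computational_Algebra.Formal_Power_Series"
begin

(*
  Let x_0 = ... = x_(m-1) = 0 and x_m \<noteq> 0 with m < n, and let V = v_0 + v_1 t + ... be the
  inverse of the power series x_m + x_(m+1) t + ... .  A unitriangular change of basis built from V
  transforms H_(n,n)(x) by congruence into the block diagonal matrix diag(H_(m,m)(x), -H(y)) with
  y_i = v_(m+2+i); the first block is anti-triangular with x_m on its antidiagonal, so H_(n,n)(x)
  is singular iff H(y), a Hankel matrix of size n - m, is.  Since v_r is determined by
  x_m, ..., x_(m+r) and determines x_(m+r) in turn, replacing the tail of x by y is a bijection
  between the tuples extending a fixed prefix of length n and those extending another fixed prefix,
  which reduces the count to a smaller n.  When the prefix of length n vanishes, H_(n,n)(x) is
  anti-triangular and singular iff x_n = 0.  Summing over the q^(n-k) prefixes of length n that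
  extend a gives q^(n-k) q^n.
*)

lemma fps_inverse_nth_cong:
  fixes f g :: "'a::{comm_monoid_add,inverse,times,uminus} fps"
  assumes "\<And>k. k \<le> n \<Longrightarrow> fps_nth f k = fps_nth g k"
  shows "fps_nth (inverse f) n = fps_nth (inverse g) n"
proof -
  have "fps_nth f 0 = fps_nth g 0" using assms by simp
  then show ?thesis
    using fps_right_inverse_constructor_cong[of n f g] assms by (simp add: fps_inverse_def)
qed

lemma fps_mult_inverse_nth:
  fixes f :: "'a::field fps"
  assumes "fps_nth f 0 \<noteq> 0"
  shows "(\<Sum>i=0..n. fps_nth f i * fps_nth (inverse f) (n - i)) = (if n = 0 then 1 else 0)"
  using arg_cong[OF inverse_mult_eq_1'[OF assms], of "\<lambda>h. fps_nth h n"] by (simp add: fps_mult_nth)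

lemma fps_nth_eq_if_inverse_nth_eq:
  fixes f g :: "'a::field fps"
  assumes f0: "fps_nth f 0 \<noteq> 0" and r: "0 < r"
    and below: "\<And>k. k < r \<Longrightarrow> fps_nth f k = fps_nth g k"
    and inv: "fps_nth (inverse f) r = fps_nth (inverse g) r"
  shows "fps_nth f r = fps_nth g r"
proof -
  (* Coefficient r of f * inverse f = 1 is f_r / f_0 plus terms on which f and g agree. *)
  have g0: "fps_nth g 0 \<noteq> 0" using f0 below r by simp
  have split: "(\<Sum>i=0..r. fps_nth h i * fps_nth (inverse h) (r - i))
      = fps_nth h r * inverse (fps_nth f 0) + (\<Sum>i<r. fps_nth h i * fps_nth (inverse h) (r - i))"
    if "fps_nth h 0 = fps_nth f 0" for h :: "'a fps"
    using that by (simp add: atLeast0AtMost flip: lessThan_Suc_atMost)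
  have same: "(\<Sum>i<r. fps_nth f i * fps_nth (inverse f) (r - i))
      = (\<Sum>i<r. fps_nth g i * fps_nth (inverse g) (r - i))"
  proof (intro sum.cong refl)
    fix i assume "i \<in> {..<r}"
    then show "fps_nth f i * fps_nth (inverse f) (r - i) = fps_nth g i * fps_nth (inverse g) (r - i)"
      using inv below by (cases "i = 0") (auto intro!: fps_inverse_nth_cong)
  qed
  have "fps_nth h r * inverse (fps_nth f 0) = - (\<Sum>i<r. fps_nth g i * fps_nth (inverse g) (r - i))"
    if "h \<in> {f, g}" for h
    using that fps_mult_inverse_nth[OF f0, of r] fps_mult_inverse_nth[OF g0, of r] r
      split[of f] split[of g] below[of 0] same by (auto simp: eq_neg_iff_add_eq_0)
  then have "fps_nth f r * inverse (fps_nth f 0) = fps_nth g r * inverse (fps_nth f 0)" by simp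
  then show ?thesis using f0 by simp
qed

definition hankel_mat :: "nat \<Rightarrow> (nat \<Rightarrow> 'a) \<Rightarrow> 'a mat" where
  "hankel_mat N x = mat N N (\<lambda>(i, j). x (i + j))"

lemma hankel_eq_hankel_mat: "hankel n xs = hankel_mat (n + 1) ((!) xs)"
  by (simp add: hankel_def hankel_mat_def)

lemma hankel_mat_carrier [simp]: "hankel_mat N x \<in> carrier_mat N N"
  and dim_hankel_mat [simp]: "dim_row (hankel_mat N x) = N" "dim_col (hankel_mat N x) = N"
  by (simp_all add: hankel_mat_def)

lemma hankel_mat_cong:
  assumes "\<And>k. k + 1 < 2 * N \<Longrightarrow> x k = y k"
  shows "hankel_mat N x = hankel_mat N y"
  using assms by (auto simp: hankel_mat_def intro!: cong_mat)

lemma det_anti_triangular_hankel_mat_eq_0_iff: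
  fixes x :: "nat \<Rightarrow> 'a::idom"
  assumes N: "0 < N" and zeros: "\<And>t. t + 1 < N \<Longrightarrow> x t = 0"
  shows "det (hankel_mat N x) = 0 \<longleftrightarrow> x (N - 1) = 0"
proof -
  (* R reverses the columns: H * R is lower triangular with x (N - 1) on the diagonal. *)
  define R :: "'a mat" where "R = mat N N (\<lambda>(i, j). of_bool (i + j = N - 1))"
  define H where "H = hankel_mat N x"
  have R: "R \<in> carrier_mat N N" and H: "H \<in> carrier_mat N N" by (auto simp: R_def H_def)
  have R_nth: "(M * R) $$ (i, j) = M $$ (i, N - 1 - j)"
    if "M \<in> carrier_mat N N" "i < N" "j < N" for M i j
  proof -
    have "{..<N} \<inter> {k. k + j = N - 1} = {N - 1 - j}" using that by auto
    then show ?thesis using that by (simp add: R_def scalar_prod_def atLeast0LessThan)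
  qed
  have "R * R = 1\<^sub>m N"
  proof (rule eq_matI)
    fix i j assume "i < dim_row (1\<^sub>m N :: 'a mat)" "j < dim_col (1\<^sub>m N :: 'a mat)"
    then show "(R * R) $$ (i, j) = 1\<^sub>m N $$ (i, j)" by (subst R_nth[OF R]) (auto simp: R_def)
  qed (use R in auto)
  then have "det R * det R = 1" using det_mult[OF R R] by simp
  then have "det R \<noteq> 0" by auto
  have HR: "(H * R) $$ (i, j) = x (i + (N - 1 - j))" if "i < N" "j < N" for i j
    using R_nth[OF H that] that by (simp add: H_def hankel_mat_def)
  have "det (H * R) = prod_list (diag_mat (H * R))"
  proof (rule det_lower_triangular[of N])
    fix i j :: nat assume "i < j" "j < N"
    then show "(H * R) $$ (i, j) = 0" by (subst HR) (auto intro: zeros)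
  qed (use H R in auto)
  also have "diag_mat (H * R) = map (\<lambda>i. x (N - 1)) [0..<N]"
    unfolding diag_mat_def using H R by (intro map_cong) (auto simp: HR simp del: index_mult_mat(1))
  also have "prod_list \<dots> = x (N - 1) ^ N" by (simp add: map_replicate_const)
  finally have "det H * det R = x (N - 1) ^ N" using det_mult[OF H R] by simp
  then show ?thesis using \<open>det R \<noteq> 0\<close> N by (auto simp: H_def power_0_left)
qed

definition reduction_mat :: "nat \<Rightarrow> nat \<Rightarrow> (nat \<Rightarrow> 'a::comm_ring_1) \<Rightarrow> 'a mat"
  where
  "reduction_mat N p v =
     mat N N (\<lambda>(r, c). if c < p then of_bool (r = c) else if r \<le> c then v (c - r) else 0)"

lemma reduction_mat_carrier [simp]: "reduction_mat N p v \<in> carrier_mat N N"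
  and dim_reduction_mat [simp]:
    "dim_row (reduction_mat N p v) = N" "dim_col (reduction_mat N p v) = N"
  by (simp_all add: reduction_mat_def)

lemma det_reduction_mat_neq_0:
  fixes v :: "nat \<Rightarrow> 'a::idom"
  assumes "v 0 \<noteq> 0"
  shows "det (reduction_mat N p v) \<noteq> 0"
proof -
  have "det (reduction_mat N p v) = prod_list (diag_mat (reduction_mat N p v))"
    by (rule det_upper_triangular[of _ N]) (auto simp: upper_triangular_def reduction_mat_def)
  also have "\<dots> \<noteq> 0"
    using assms by (auto simp: diag_mat_def reduction_mat_def)
  finally show ?thesis .
qed

lemma mult_reduction_mat_index:
  assumes "M \<in> carrier_mat R N" "i < R" "j < N"
  shows "(M * reduction_mat N p v) $$ (i, j)
    = (if j < p then M $$ (i, j) else (\<Sum>s=0..j. M $$ (i, s) * v (j - s)))"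
proof -
  have "(M * reduction_mat N p v) $$ (i, j)
      = (\<Sum>s<N. M $$ (i, s)
          * (if j < p then of_bool (s = j) else if s \<le> j then v (j - s) else 0))"
    using assms by (auto simp: reduction_mat_def scalar_prod_def atLeast0LessThan intro!: sum.cong)
  also have "\<dots> = (if j < p then M $$ (i, j) else (\<Sum>s=0..j. M $$ (i, s) * v (j - s)))"
  proof (cases "j < p")
    case True
    have "{..<N} \<inter> {s. s = j} = {j}" using assms by auto
    then show ?thesis using True by simp
  next
    case False
    have "(\<Sum>s<N. M $$ (i, s) * (if s \<le> j then v (j - s) else 0))
        = (\<Sum>s\<in>{..<N} \<inter> {0..j}. M $$ (i, s) * v (j - s))"
      by (subst sum.inter_restrict) (auto intro!: sum.cong)
    also have "{..<N} \<inter> {0..j} = {0..j}" using assms by auto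
    finally show ?thesis using False by simp
  qed
  finally show ?thesis .
qed

lemma transpose_reduction_mat_mult_index:
  assumes "M \<in> carrier_mat N C" "i < N" "j < C"
  shows "(transpose_mat (reduction_mat N p v) * M) $$ (i, j)
    = (if i < p then M $$ (i, j) else (\<Sum>r=0..i. v (i - r) * M $$ (r, j)))"
proof -
  have "transpose_mat (reduction_mat N p v) * M
      = transpose_mat (transpose_mat M * reduction_mat N p v)"
    using assms by (simp add: transpose_mult[of "transpose_mat M" C N _ N])
  then have "(transpose_mat (reduction_mat N p v) * M) $$ (i, j)
      = (transpose_mat M * reduction_mat N p v) $$ (j, i)"
    using assms by simp
  also have "\<dots> = (if i < p then transpose_mat M $$ (j, i)
      else (\<Sum>s=0..i. transpose_mat M $$ (j, s) * v (i - s)))"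
    by (rule mult_reduction_mat_index) (use assms in auto)
  also have "\<dots> = (if i < p then M $$ (i, j) else (\<Sum>r=0..i. v (i - r) * M $$ (r, j)))"
    using assms by (auto simp: mult.commute intro!: sum.cong)
  finally show ?thesis .
qed

definition tail_inverse :: "(nat \<Rightarrow> 'a::field) \<Rightarrow> nat \<Rightarrow> 'a fps" where
  "tail_inverse x m = inverse (fps_shift m (Abs_fps x))"

context
  fixes x :: "nat \<Rightarrow> 'a::field" and m :: nat
  assumes zeros: "\<And>t. t < m \<Longrightarrow> x t = 0" and pivot: "x m \<noteq> 0"
begin

lemma convolution_tail_inverse:
  "(\<Sum>i=0..k. x (m + i) * fps_nth (tail_inverse x m) (k - i)) = (if k = 0 then 1 else 0)"
  using fps_mult_inverse_nth[of "fps_shift m (Abs_fps x)" k] pivot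
  by (simp add: tail_inverse_def add.commute)

lemma sum_mult_tail_inverse_eq_0:
  assumes "c \<le> m" "m < j"
  shows "(\<Sum>s=0..j. x (c + s) * fps_nth (tail_inverse x m) (j - s)) = 0"
proof -
  define d where "d = m - c"
  have split: "{0..j} = {0..<d} \<union> {0 + d..(j + c - m) + d}" using assms by (auto simp: d_def)
  have "(\<Sum>s=0..j. x (c + s) * fps_nth (tail_inverse x m) (j - s))
      = (\<Sum>s\<in>{0..<d}. x (c + s) * fps_nth (tail_inverse x m) (j - s))
        + (\<Sum>s\<in>{0 + d..(j + c - m) + d}. x (c + s) * fps_nth (tail_inverse x m) (j - s))"
    unfolding split by (rule sum.union_disjoint) auto
  also have "(\<Sum>s\<in>{0..<d}. x (c + s) * fps_nth (tail_inverse x m) (j - s)) = 0"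
    using zeros by (intro sum.neutral) (auto simp: d_def)
  also have "(\<Sum>s\<in>{0 + d..(j + c - m) + d}. x (c + s) * fps_nth (tail_inverse x m) (j - s))
      = (\<Sum>i=0..j + c - m. x (m + i) * fps_nth (tail_inverse x m) (j + c - m - i))"
    unfolding sum.shift_bounds_cl_nat_ivl
    by (intro sum.cong refl) (use assms in \<open>auto simp: d_def algebra_simps\<close>)
  also have "\<dots> = 0" using assms by (subst convolution_tail_inverse) auto
  finally show ?thesis by simp
qed

lemma sum_mult_tail_inverse_eq_neg:
  assumes "m < i" "m < j"
  shows "(\<Sum>s=0..j. x (i + s) * fps_nth (tail_inverse x m) (j - s))
    = - fps_nth (fps_shift m (Abs_fps x) * fps_shift (j + 1) (tail_inverse x m)) (i - m - 1)"
proof -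
  define g where "g = i - m - 1"
  define N where "N = g + 1 + j"
  have "{0..N} = {0..g} \<union> {0 + (g + 1)..j + (g + 1)}" by (auto simp: N_def)
  then have "0 = (\<Sum>u\<in>{0..g}. x (m + u) * fps_nth (tail_inverse x m) (N - u))
      + (\<Sum>u\<in>{0 + (g + 1)..j + (g + 1)}. x (m + u) * fps_nth (tail_inverse x m) (N - u))"
    using convolution_tail_inverse[of N] by (simp add: N_def sum.union_disjoint)
  also have "(\<Sum>u\<in>{0..g}. x (m + u) * fps_nth (tail_inverse x m) (N - u))
      = fps_nth (fps_shift m (Abs_fps x) * fps_shift (j + 1) (tail_inverse x m)) g"
    unfolding fps_mult_nth by (intro sum.cong refl) (auto simp: N_def add.commute Suc_diff_le)
  also have "(\<Sum>u\<in>{0 + (g + 1)..j + (g + 1)}. x (m + u) * fps_nth (tail_inverse x m) (N - u))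
      = (\<Sum>s=0..j. x (i + s) * fps_nth (tail_inverse x m) (j - s))"
    unfolding sum.shift_bounds_cl_nat_ivl
    by (intro sum.cong refl) (use assms in \<open>auto simp: N_def g_def algebra_simps\<close>)
  finally show ?thesis by (simp add: g_def eq_neg_iff_add_eq_0 add.commute)
qed

lemma sum_sum_mult_tail_inverse_eq_neg:
  assumes "m < i" "m < j"
  shows "(\<Sum>r=0..i. fps_nth (tail_inverse x m) (i - r)
            * (\<Sum>s=0..j. x (r + s) * fps_nth (tail_inverse x m) (j - s)))
    = - fps_nth (tail_inverse x m) (i + j - m)"
proof -
  define V where "V = tail_inverse x m"
  define W where "W = fps_shift m (Abs_fps x)"
  define Z where "Z = fps_shift (j + 1) V"
  define e where "e = i - m - 1"
  have WV: "W * V = 1"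
    unfolding V_def W_def tail_inverse_def by (rule inverse_mult_eq_1') (simp add: pivot)
  have split: "{0..i} = {0..m} \<union> {0 + (m + 1)..e + (m + 1)}" using assms by (auto simp: e_def)
  have "(\<Sum>r=0..i. fps_nth V (i - r) * (\<Sum>s=0..j. x (r + s) * fps_nth V (j - s)))
      = (\<Sum>r\<in>{0..m}. fps_nth V (i - r) * (\<Sum>s=0..j. x (r + s) * fps_nth V (j - s)))
        + (\<Sum>r\<in>{0 + (m + 1)..e + (m + 1)}.
            fps_nth V (i - r) * (\<Sum>s=0..j. x (r + s) * fps_nth V (j - s)))"
    unfolding split by (rule sum.union_disjoint) auto
  also have "(\<Sum>r\<in>{0..m}. fps_nth V (i - r) * (\<Sum>s=0..j. x (r + s) * fps_nth V (j - s))) = 0"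
    using assms by (intro sum.neutral) (simp add: V_def sum_mult_tail_inverse_eq_0)
  also have "(\<Sum>r\<in>{0 + (m + 1)..e + (m + 1)}.
        fps_nth V (i - r) * (\<Sum>s=0..j. x (r + s) * fps_nth V (j - s)))
      = (\<Sum>g=0..e. - (fps_nth (W * Z) g * fps_nth V (e - g)))"
    unfolding sum.shift_bounds_cl_nat_ivl
  proof (intro sum.cong refl)
    fix g assume "g \<in> {0..e}"
    then have "i - (g + (m + 1)) = e - g" by (simp add: e_def)
    moreover have "(\<Sum>s=0..j. x (g + (m + 1) + s) * fps_nth V (j - s)) = - fps_nth (W * Z) g"
      using sum_mult_tail_inverse_eq_neg[of "g + (m + 1)" j] assms by (simp add: V_def W_def Z_def)
    ultimately show "fps_nth V (i - (g + (m + 1)))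
          * (\<Sum>s=0..j. x (g + (m + 1) + s) * fps_nth V (j - s))
        = - (fps_nth (W * Z) g * fps_nth V (e - g))" by simp
  qed
  also have "\<dots> = - fps_nth (W * Z * V) e"
    by (simp add: fps_mult_nth[of "W * Z" V] sum_negf)
  also have "W * Z * V = Z" by (simp add: ac_simps WV[unfolded mult.commute[of W]])
  also have "fps_nth Z e = fps_nth V (i + j - m)" using assms by (simp add: Z_def e_def Suc_diff_Suc)
  finally show ?thesis by (simp add: V_def)
qed

lemma hankel_mat_congruence:
  assumes "m < N"
  defines "A \<equiv> reduction_mat N (m + 1) (fps_nth (tail_inverse x m))"
    and "d \<equiv> N - (m + 1)"
  shows "transpose_mat A * hankel_mat N x * A
    = four_block_mat (hankel_mat (m + 1) x) (0\<^sub>m (m + 1) d) (0\<^sub>m d (m + 1))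
        ((-1) \<cdot>\<^sub>m hankel_mat d (\<lambda>i. fps_nth (tail_inverse x m) (m + 2 + i)))"
    (is "_ = ?B")
proof (rule eq_matI)
  define v where "v = fps_nth (tail_inverse x m)"
  have A: "A = reduction_mat N (m + 1) v" by (simp add: A_def v_def)
  have Nd: "N = (m + 1) + d" using assms by (simp add: d_def)
  fix i j assume "i < dim_row ?B" "j < dim_col ?B"
  then have i: "i < N" and j: "j < N" using Nd by auto
  have AH: "(transpose_mat A * hankel_mat N x) $$ (i, s)
      = (if i \<le> m then x (i + s) else (\<Sum>r=0..i. v (i - r) * x (r + s)))" if "s < N" for s
  proof -
    have "(transpose_mat A * hankel_mat N x) $$ (i, s)
        = (if i < m + 1 then hankel_mat N x $$ (i, s)
           else (\<Sum>r=0..i. v (i - r) * hankel_mat N x $$ (r, s)))"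
      unfolding A by (rule transpose_reduction_mat_mult_index) (use i that in auto)
    then show ?thesis using i that by (simp add: hankel_mat_def)
  qed
  have "(transpose_mat A * hankel_mat N x * A) $$ (i, j)
      = (if j < m + 1 then (transpose_mat A * hankel_mat N x) $$ (i, j)
         else (\<Sum>s=0..j. (transpose_mat A * hankel_mat N x) $$ (i, s) * v (j - s)))"
    unfolding A by (rule mult_reduction_mat_index) (use i j in auto)
  also have "\<dots> = ?B $$ (i, j)"
  proof (cases "i \<le> m"; cases "j \<le> m")
    assume "i \<le> m" "j \<le> m"
    then show ?thesis using i j AH Nd by (simp add: hankel_mat_def)
  next
    assume "i \<le> m" "\<not> j \<le> m"
    then show ?thesis using i j AH Nd sum_mult_tail_inverse_eq_0[of i j]
      by (simp add: v_def)
  next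
    assume "\<not> i \<le> m" "j \<le> m"
    moreover have "(\<Sum>r=0..i. v (i - r) * x (r + j)) = (\<Sum>s=0..i. x (j + s) * v (i - s))"
      by (simp add: ac_simps)
    ultimately show ?thesis using i j AH Nd sum_mult_tail_inverse_eq_0[of j i]
      by (simp add: v_def)
  next
    assume "\<not> i \<le> m" "\<not> j \<le> m"
    have "(\<Sum>s=0..j. (\<Sum>r=0..i. v (i - r) * x (r + s)) * v (j - s))
        = (\<Sum>r=0..i. v (i - r) * (\<Sum>s=0..j. x (r + s) * v (j - s)))"
      by (simp add: sum_distrib_left sum_distrib_right mult.assoc sum.swap[of _ "{0..j}"])
    also have "\<dots> = - v (i + j - m)"
      unfolding v_def using \<open>\<not> i \<le> m\<close> \<open>\<not> j \<le> m\<close>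
      by (simp add: sum_sum_mult_tail_inverse_eq_neg)
    also have "\<dots> = ?B $$ (i, j)"
    proof -
      have "i = m + 1 + (i - (m + 1))" "j = m + 1 + (j - (m + 1))"
        using \<open>\<not> i \<le> m\<close> \<open>\<not> j \<le> m\<close> by simp_all
      then obtain e f where "i = m + 1 + e" "j = m + 1 + f" by blast
      then show ?thesis using i j Nd by (simp add: hankel_mat_def v_def ac_simps)
    qed
    finally show ?thesis using i j AH \<open>\<not> i \<le> m\<close> \<open>\<not> j \<le> m\<close> by simp
  qed
  finally show "(transpose_mat A * hankel_mat N x * A) $$ (i, j) = ?B $$ (i, j)" .
qed (use assms in \<open>auto simp: d_def A_def\<close>)

lemma det_hankel_mat_eq_0_iff_reduced:
  assumes "m < N"
  shows "det (hankel_mat N x) = 0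
    \<longleftrightarrow> det (hankel_mat (N - (m + 1)) (\<lambda>i. fps_nth (tail_inverse x m) (m + 2 + i))) = 0"
proof -
  define A where "A = reduction_mat N (m + 1) (fps_nth (tail_inverse x m))"
  define d where "d = N - (m + 1)"
  define H' where "H' = hankel_mat d (\<lambda>i. fps_nth (tail_inverse x m) (m + 2 + i))"
  have A: "A \<in> carrier_mat N N" by (simp add: A_def)
  have "det A \<noteq> 0"
    unfolding A_def by (rule det_reduction_mat_neq_0) (simp add: tail_inverse_def pivot)
  have "det (hankel_mat (m + 1) x) \<noteq> 0"
    using det_anti_triangular_hankel_mat_eq_0_iff[of "m + 1" x] zeros pivot by simp
  have "det A * det (hankel_mat N x) * det A = det (transpose_mat A * hankel_mat N x * A)"
    using A by (simp add: det_mult[of _ N] det_transpose)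
  also have "\<dots> = det (hankel_mat (m + 1) x) * ((-1) ^ d * det H')"
    unfolding A_def H'_def d_def hankel_mat_congruence[OF assms]
    by (subst det_four_block_mat_lower_left_zero) auto
  finally show ?thesis
    using \<open>det A \<noteq> 0\<close> \<open>det (hankel_mat (m + 1) x) \<noteq> 0\<close> by (auto simp: H'_def d_def)
qed

end

(* Beyond the end of xs the function (!) xs is unspecified, but coefficient p - m of the tail
   inverse only involves the entries xs ! t with t \<le> p. *)
definition hankel_reduce :: "nat \<Rightarrow> 'a::field list \<Rightarrow> 'a list" where
  "hankel_reduce m xs =
     map (\<lambda>p. if p < 2 * m + 2 then xs ! p else fps_nth (tail_inverse ((!) xs) m) (p - m))
       [0..<length xs]"

lemma length_hankel_reduce [simp]: "length (hankel_reduce m xs) = length xs"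
  by (simp add: hankel_reduce_def)

lemma nth_hankel_reduce:
  "p < length xs \<Longrightarrow> hankel_reduce m xs ! p
    = (if p < 2 * m + 2 then xs ! p else fps_nth (tail_inverse ((!) xs) m) (p - m))"
  by (simp add: hankel_reduce_def)

lemma det_hankel_eq_0_iff_reduced:
  fixes xs :: "'a::field list"
  assumes "length xs = 2 * n + 1" "m < n" "\<And>t. t < m \<Longrightarrow> xs ! t = 0" "xs ! m \<noteq> 0"
  shows "det (hankel n xs) = 0
    \<longleftrightarrow> det (hankel (n - m - 1) (drop (2 * m + 2) (hankel_reduce m xs))) = 0"
proof -
  have size: "n - m - 1 + 1 = n + 1 - (m + 1)" using assms(2) by simp
  have "hankel (n - m - 1) (drop (2 * m + 2) (hankel_reduce m xs))
      = hankel_mat (n + 1 - (m + 1)) (\<lambda>i. fps_nth (tail_inverse ((!) xs) m) (m + 2 + i))"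
    unfolding hankel_eq_hankel_mat size using assms(1,2)
    by (intro hankel_mat_cong) (simp add: nth_hankel_reduce Suc_diff_Suc add.commute)
  then show ?thesis
    unfolding hankel_eq_hankel_mat
    using det_hankel_mat_eq_0_iff_reduced[where x = "(!) xs" and m = m and N = "n + 1"] assms by simp
qed

lemma take_hankel_reduce_cong:
  assumes "length xs = length ys" "take j xs = take j ys"
  shows "take j (hankel_reduce m xs) = take j (hankel_reduce m ys)"
proof (rule nth_equalityI)
  fix p assume "p < length (take j (hankel_reduce m xs))"
  then have p: "p < j" "p < length xs" by simp_all
  have agree: "xs ! t = ys ! t" if "t < j" for t
    using assms(2) that by (metis nth_take)
  have "fps_nth (tail_inverse ((!) xs) m) (p - m) = fps_nth (tail_inverse ((!) ys) m) (p - m)"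
    if "\<not> p < 2 * m + 2"
    unfolding tail_inverse_def using that p by (intro fps_inverse_nth_cong) (simp add: agree)
  then show "take j (hankel_reduce m xs) ! p = take j (hankel_reduce m ys) ! p"
    using p assms(1) agree by (simp add: nth_hankel_reduce)
qed (use assms in simp)

lemma hankel_reduce_inj:
  fixes xs ys :: "'a::field list"
  assumes len: "length xs = length ys" and pivot: "xs ! m \<noteq> 0"
    and eq: "hankel_reduce m xs = hankel_reduce m ys"
  shows "xs = ys"
proof -
  have "p < length xs \<longrightarrow> xs ! p = ys ! p" for p
  proof (induction p rule: less_induct)
    case (less p)
    show ?case
    proof
      assume p: "p < length xs"
      have red: "hankel_reduce m xs ! p = hankel_reduce m ys ! p" using eq by simp
      show "xs ! p = ys ! p"
      proof (cases "p < 2 * m + 2")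
        case True
        then show ?thesis using red p len by (simp add: nth_hankel_reduce)
      next
        case False
        let ?f = "fps_shift m (Abs_fps ((!) xs))" and ?g = "fps_shift m (Abs_fps ((!) ys))"
        have "fps_nth ?f (p - m) = fps_nth ?g (p - m)"
        proof (rule fps_nth_eq_if_inverse_nth_eq)
          show "fps_nth (inverse ?f) (p - m) = fps_nth (inverse ?g) (p - m)"
            using red p len False by (simp add: nth_hankel_reduce tail_inverse_def)
        qed (use pivot False less.IH p in auto)
        then show ?thesis using False by simp
      qed
    qed
  qed
  then show ?thesis using len by (intro nth_equalityI) auto
qed

lemma card_lists_with_prefix:
  assumes "length (a :: 'a::finite list) = k" "k \<le> L"
  shows "card {xs. length xs = L \<and> take k xs = a} = card (UNIV :: 'a set) ^ (L - k)"
proof -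
  have "{xs. length xs = L \<and> take k xs = a} = (@) a ` {ys. length ys = L - k}"
  proof (intro equalityI subsetI)
    fix xs assume "xs \<in> {xs. length xs = L \<and> take k xs = a}"
    then have "xs = a @ drop k xs" "length (drop k xs) = L - k"
      by (metis (mono_tags) append_take_drop_id mem_Collect_eq, simp)
    then show "xs \<in> (@) a ` {ys. length ys = L - k}" by blast
  qed (use assms in auto)
  also have "card \<dots> = card {ys :: 'a list. length ys = L - k}"
    by (rule card_image) (simp add: inj_on_def)
  finally show ?thesis using card_lists_length_eq[of "UNIV :: 'a set" "L - k"] by simp
qed

lemma card_lists_append_split:
  fixes P Q :: "'a list \<Rightarrow> bool"
  shows "card {zs. length zs = k + l \<and> P (take k zs) \<and> Q (drop k zs)}
       = card {u. length u = k \<and> P u} * card {v. length v = l \<and> Q v}"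
proof -
  have "{zs. length zs = k + l \<and> P (take k zs) \<and> Q (drop k zs)}
      = (\<lambda>(u, v). u @ v) ` ({u. length u = k \<and> P u} \<times> {v. length v = l \<and> Q v})"
  proof (intro equalityI subsetI)
    fix zs assume "zs \<in> {zs. length zs = k + l \<and> P (take k zs) \<and> Q (drop k zs)}"
    then show "zs \<in> (\<lambda>(u, v). u @ v) ` ({u. length u = k \<and> P u} \<times> {v. length v = l \<and> Q v})"
      by (intro image_eqI[of _ _ "(take k zs, drop k zs)"]) auto
  qed auto
  also have "card \<dots> = card ({u. length u = k \<and> P u} \<times> {v. length v = l \<and> Q v})"
    by (rule card_image) (auto simp: inj_on_def)
  finally show ?thesis by (simp add: card_cartesian_product)
qed

lemma card_prefix_refine:
  fixes A :: "'a::finite list set"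
  assumes "finite A" "length a \<le> j" "\<And>xs. xs \<in> A \<Longrightarrow> j \<le> length xs"
    and fibre: "\<And>b. length b = j - length a \<Longrightarrow> card {xs \<in> A. take j xs = a @ b} = c"
  shows "card {xs \<in> A. take (length a) xs = a} = card (UNIV :: 'a set) ^ (j - length a) * c"
proof -
  let ?B = "{b :: 'a list. length b = j - length a}"
  have "{xs \<in> A. take (length a) xs = a} = (\<Union>b\<in>?B. {xs \<in> A. take j xs = a @ b})"
  proof (intro equalityI subsetI)
    fix xs assume xs: "xs \<in> {xs \<in> A. take (length a) xs = a}"
    have "take j xs = take (length a) xs @ take (j - length a) (drop (length a) xs)"
      using assms(2) by (metis le_add_diff_inverse take_add)
    moreover have "length (take (j - length a) (drop (length a) xs)) = j - length a"
      using xs assms(3)[of xs] by auto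
    ultimately show "xs \<in> (\<Union>b\<in>?B. {xs \<in> A. take j xs = a @ b})" using xs by auto
  next
    fix xs assume "xs \<in> (\<Union>b\<in>?B. {xs \<in> A. take j xs = a @ b})"
    then obtain b where "xs \<in> A" "take j xs = a @ b" by auto
    moreover have "take (length a) (take j xs) = take (length a) xs" using assms(2) by simp
    ultimately show "xs \<in> {xs \<in> A. take (length a) xs = a}" by auto
  qed
  also have "card \<dots> = (\<Sum>b\<in>?B. card {xs \<in> A. take j xs = a @ b})"
    using assms(1) finite_lists_length_eq[of "UNIV :: 'a set" "j - length a"]
    by (intro card_UN_disjoint) auto
  also have "\<dots> = card (UNIV :: 'a set) ^ (j - length a) * c"
    using card_lists_length_eq[of "UNIV :: 'a set" "j - length a"] by (simp add: fibre)
  finally show ?thesis .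
qed

lemma bij_betw_hankel_reduce:
  fixes a :: "'a::{field,finite} list"
  assumes "length a = k" "k \<le> L" "m < k" "a ! m \<noteq> 0"
  defines "b \<equiv> take k (hankel_reduce m (a @ replicate (L - k) 0))" \<comment> \<open>any extension of a gives the same b\<close>
  shows "bij_betw (hankel_reduce m) {xs. length xs = L \<and> take k xs = a}
    {zs. length zs = L \<and> take k zs = b}"
proof -
  let ?D = "{xs. length xs = L \<and> take k xs = a}" and ?D' = "{zs. length zs = L \<and> take k zs = b}"
  have a0: "a @ replicate (L - k) 0 \<in> ?D" using assms by simp
  have "inj_on (hankel_reduce m) ?D"
  proof (rule inj_onI)
    fix xs ys assume "xs \<in> ?D" "ys \<in> ?D" "hankel_reduce m xs = hankel_reduce m ys"
    moreover have "xs ! m = a ! m"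
      using \<open>xs \<in> ?D\<close> assms(3) by (metis (mono_tags) mem_Collect_eq nth_take)
    ultimately show "xs = ys" using assms(4) by (intro hankel_reduce_inj[of xs ys m]) auto
  qed
  moreover have "hankel_reduce m ` ?D \<subseteq> ?D'"
  proof
    fix zs assume "zs \<in> hankel_reduce m ` ?D"
    then obtain xs where "xs \<in> ?D" "zs = hankel_reduce m xs" by auto
    then show "zs \<in> ?D'" using a0 take_hankel_reduce_cong[of xs "a @ replicate (L - k) 0" k m]
      by (auto simp: b_def)
  qed
  moreover have "card ?D = card ?D'"
    using assms a0 by (simp add: card_lists_with_prefix b_def)
  moreover have "finite ?D'"
    using finite_lists_length_eq[of "UNIV :: 'a set" L] by (auto intro: finite_subset)
  ultimately show ?thesis
    by (metis (no_types, lifting) bij_betw_def card_image card_subset_eq)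
qed

definition singular_hankels :: "nat \<Rightarrow> 'a::field list \<Rightarrow> 'a list set" where
  "singular_hankels n a =
     {xs. length xs = 2 * n + 1 \<and> take (length a) xs = a \<and> det (hankel n xs) = 0}"

lemma card_singular_hankels_zero_prefix:
  fixes a :: "'a::{field,finite} list"
  assumes "length a = n" "\<And>t. t < n \<Longrightarrow> a ! t = 0"
  shows "card (singular_hankels n a) = card (UNIV :: 'a set) ^ n"
proof -
  have "det (hankel n xs) = 0 \<longleftrightarrow> xs ! n = 0" if "take n xs = a" for xs :: "'a list"
    unfolding hankel_eq_hankel_mat using that assms
    by (subst det_anti_triangular_hankel_mat_eq_0_iff) auto
  then have "singular_hankels n a = {xs. length xs = 2 * n + 1 \<and> take (n + 1) xs = a @ [0]}"
    using assms(1) by (auto simp: singular_hankels_def take_Suc_conv_app_nth)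
  then show ?thesis using assms(1) by (simp add: card_lists_with_prefix)
qed

lemma card_singular_hankels_eq_card_reduced:
  fixes a :: "'a::{field,finite} list"
  assumes "length a = n" "m < n" "\<And>t. t < m \<Longrightarrow> a ! t = 0" "a ! m \<noteq> 0"
  shows "card (singular_hankels n a) = card {zs. length zs = 2 * n + 1
      \<and> take n zs = take n (hankel_reduce m (a @ replicate (n + 1) 0))
      \<and> det (hankel (n - m - 1) (drop (2 * m + 2) zs)) = 0}"
proof -
  define Q where "Q zs \<longleftrightarrow> det (hankel (n - m - 1) (drop (2 * m + 2) zs)) = 0" for zs :: "'a list"
  let ?D = "{xs. length xs = 2 * n + 1 \<and> take n xs = a}"
  have bij: "bij_betw (hankel_reduce m) ?D
      {zs. length zs = 2 * n + 1 \<and> take n zs = take n (hankel_reduce m (a @ replicate (n + 1) 0))}"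
    using bij_betw_hankel_reduce[of a n "2 * n + 1" m] assms by (simp add: Suc_diff_le)
  have "det (hankel n xs) = 0 \<longleftrightarrow> Q (hankel_reduce m xs)" if "xs \<in> ?D" for xs
  proof -
    have "take n xs = a" using \<open>xs \<in> ?D\<close> by simp
    then have "xs ! t = a ! t" if "t < n" for t using that by (metis nth_take)
    then show ?thesis
      unfolding Q_def using that assms(2-4) by (intro det_hankel_eq_0_iff_reduced) auto
  qed
  then have "singular_hankels n a = {xs \<in> ?D. Q (hankel_reduce m xs)}"
    using assms(1) by (auto simp: singular_hankels_def)
  moreover have "inj_on (hankel_reduce m) {xs \<in> ?D. Q (hankel_reduce m xs)}"
    using bij unfolding bij_betw_def by (rule inj_on_subset[OF conjunct1]) auto
  ultimately have "card (singular_hankels n a)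
      = card (hankel_reduce m ` {xs \<in> ?D. Q (hankel_reduce m xs)})"
    by (simp add: card_image)
  also have "hankel_reduce m ` {xs \<in> ?D. Q (hankel_reduce m xs)} = {zs \<in> hankel_reduce m ` ?D. Q zs}"
    by blast
  also have "hankel_reduce m ` ?D
      = {zs. length zs = 2 * n + 1 \<and> take n zs = take n (hankel_reduce m (a @ replicate (n + 1) 0))}"
    using bij by (simp add: bij_betw_def)
  finally show ?thesis by (simp add: Q_def)
qed

lemma take_eq_iff_take_drop:
  assumes "length b = n" "n \<le> length zs"
  shows "take n zs = b \<longleftrightarrow> take n (take l zs) = take l b \<and> take (n - l) (drop l zs) = drop l b"
proof -
  have "take n zs = take n (take l zs) @ take (n - l) (drop l zs)"
    by (cases "n \<le> l") (simp_all add: min_def flip: take_add)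
  moreover have "b = take l b @ drop l b" by simp
  moreover have "length (take n (take l zs)) = length (take l b)" using assms by simp
  ultimately show ?thesis by (metis append_eq_append_conv)
qed

lemma card_singular_hankels_after_prefix:
  fixes b :: "'a::{field,finite} list"
  assumes "length b = k" "k \<le> l + (2 * n + 1)"
  shows "card {zs. length zs = l + (2 * n + 1) \<and> take k zs = b \<and> det (hankel n (drop l zs)) = 0}
    = card (UNIV :: 'a set) ^ (l - min k l) * card (singular_hankels n (drop l b))"
proof -
  have "take k zs = b \<longleftrightarrow> take k (take l zs) = take l b \<and> take (k - l) (drop l zs) = drop l b"
    if "length zs = l + (2 * n + 1)" for zs :: "'a list"
    using that assms by (intro take_eq_iff_take_drop) simp_all
  then have "{zs. length zs = l + (2 * n + 1) \<and> take k zs = b \<and> det (hankel n (drop l zs)) = 0}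
      = {zs. length zs = l + (2 * n + 1) \<and> take k (take l zs) = take l b
          \<and> (take (k - l) (drop l zs) = drop l b \<and> det (hankel n (drop l zs)) = 0)}"
    by blast
  moreover have "card {zs. length zs = l + (2 * n + 1) \<and> take k (take l zs) = take l b
          \<and> (take (k - l) (drop l zs) = drop l b \<and> det (hankel n (drop l zs)) = 0)}
      = card {u. length u = l \<and> take k u = take l b}
        * card {ys. length ys = 2 * n + 1 \<and> (take (k - l) ys = drop l b \<and> det (hankel n ys) = 0)}"
    by (rule card_lists_append_split)
  moreover have "{u. length u = l \<and> take k u = take l b} = {u. length u = l \<and> take (min k l) u = take l b}"
    by (auto simp: min_def)
  moreover have "card {u. length u = l \<and> take (min k l) u = take l b}
      = card (UNIV :: 'a set) ^ (l - min k l)"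
    using assms(1) by (intro card_lists_with_prefix) auto
  moreover have "{ys. length ys = 2 * n + 1 \<and> (take (k - l) ys = drop l b \<and> det (hankel n ys) = 0)}
      = singular_hankels n (drop l b)"
    using assms(1) by (auto simp: singular_hankels_def)
  ultimately show ?thesis by (simp only:)
qed

lemma card_singular_hankels_pivot:
  fixes a :: "'a::{field,finite} list"
  assumes "length a = n" "m < n" "\<And>t. t < m \<Longrightarrow> a ! t = 0" "a ! m \<noteq> 0"
    and IH: "\<And>a' :: 'a list. length a' \<le> n - m - 1 \<Longrightarrow>
      card (singular_hankels (n - m - 1) a') = card (UNIV :: 'a set) ^ (2 * (n - m - 1) - length a')"
  shows "card (singular_hankels n a) = card (UNIV :: 'a set) ^ n"
proof -
  define q where "q = card (UNIV :: 'a set)"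
  define n' where "n' = n - m - 1"
  define l where "l = 2 * m + 2"
  define b where "b = take n (hankel_reduce m (a @ replicate (n + 1) 0))"
  have lb: "length b = n" using assms(2) by (simp add: b_def)
  have len: "2 * n + 1 = l + (2 * n' + 1)" using assms(2) by (simp add: l_def n'_def)
  have "card (singular_hankels n a)
      = card {zs. length zs = l + (2 * n' + 1) \<and> take n zs = b \<and> det (hankel n' (drop l zs)) = 0}"
    unfolding len[symmetric] using card_singular_hankels_eq_card_reduced[OF assms(1-4)]
    by (simp add: b_def l_def n'_def)
  also have "\<dots> = q ^ (l - min n l) * card (singular_hankels n' (drop l b))"
    unfolding q_def using lb len by (intro card_singular_hankels_after_prefix) simp_all
  also have "card (singular_hankels n' (drop l b)) = q ^ (2 * n' - (n - l))"
    using IH[of "drop l b"] lb assms(2) by (simp add: q_def n'_def l_def)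
  also have "q ^ (l - min n l) * q ^ (2 * n' - (n - l)) = q ^ n"
  proof -
    have "(l - min n l) + (2 * n' - (n - l)) = n" using assms(2) by (simp add: l_def n'_def min_def)
    then show ?thesis by (metis power_add)
  qed
  finally show ?thesis by (simp add: q_def)
qed

lemma card_singular_hankels:
  fixes a :: "'a::{field,finite} list"
  assumes "length a \<le> n"
  shows "card (singular_hankels n a) = card (UNIV :: 'a set) ^ (2 * n - length a)"
  using assms
proof (induction n arbitrary: a rule: less_induct)
  case (less n)
  have full_prefix: "card (singular_hankels n b) = card (UNIV :: 'a set) ^ n"
    if "length b = n" for b :: "'a list"
  proof (cases "\<forall>t<n. b ! t = 0")
    case True
    then show ?thesis using that by (intro card_singular_hankels_zero_prefix) auto
  next
    case False
    then obtain m where "m < n" "b ! m \<noteq> 0" "\<And>t. t < m \<Longrightarrow> b ! t = 0"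
      using exists_least_iff[of "\<lambda>t. t < n \<and> b ! t \<noteq> 0"] by (metis order.strict_trans)
    then show ?thesis
      using that less.IH by (intro card_singular_hankels_pivot) auto
  qed
  let ?A = "{xs :: 'a list. length xs = 2 * n + 1 \<and> det (hankel n xs) = 0}"
  have "singular_hankels n a = {xs \<in> ?A. take (length a) xs = a}"
    by (auto simp: singular_hankels_def)
  also have "card \<dots> = card (UNIV :: 'a set) ^ (n - length a) * card (UNIV :: 'a set) ^ n"
  proof (rule card_prefix_refine)
    show "finite ?A"
      using finite_lists_length_eq[of "UNIV :: 'a set" "2 * n + 1"] by (auto intro: finite_subset)
    show "card {xs \<in> ?A. take n xs = a @ b} = card (UNIV :: 'a set) ^ n"
      if "length b = n - length a" for b
      using full_prefix[of "a @ b"] that less.prems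
      by (simp add: singular_hankels_def conj_commute conj_left_commute)
  qed (use less.prems in auto)
  finally show ?case using less.prems by (simp add: mult_2 flip: power_add)
qed

theorem corollary4:
  fixes a :: "'a::{field,finite} list" and k n :: nat
  assumes "k \<le> n" and "length a = k"
  shows "card {xs :: 'a list. length xs = 2*n+1 \<and> take k xs = a \<and> det (hankel n xs) = 0}
         = card (UNIV :: 'a set) ^ (2*n - k)"
  using card_singular_hankels[of a n] assms by (simp add: singular_hankels_def)

end
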